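(* Let $\rho$ be a primitive $k$th root of unity and $0<\theta<2\pi/k$. For all $N\ge1$ with $k\mid N$, $$\prod_{j=1}^N\big|\rho^je^{ij\theta/N}-1\big|^{-1}\ll N^{4k}\exp\Big(\frac Nk\cdot\frac{\mathrm{Cl}_2(k\theta)}{k\theta}\Big),$$ with implied constant depending only on $k$ and $\theta$.
   Context: $\mathrm{Cl}_2(\theta):=\sum_{k\ge1}k^{-2}\sin(k\theta)$ is the Clausen function. *)

theory Defs
  imports "HOL-Analysis.Analysis"
begin

definition Cl2 :: "real \<Rightarrow> real" where
  "Cl2 t = (\<Sum>n. sin (real (Suc n) * t) / (real (Suc n))\<^sup>2)"

definition primitive_root_unity :: "nat \<Rightarrow> complex \<Rightarrow> bool" where
  "primitive_root_unity k z \<longleftrightarrow> k \<ge> 1 \<and> z ^ k = 1 \<and> (\<forall>m. 0 < m \<and> m < k \<longrightarrow> z ^ m \<noteq> 1)"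

end

theory Submission
  imports Defs "HOL-Computational_Algebra.Polynomial"
begin

text \<open>
  Write \<open>N = k M\<close> and \<open>j = k (m - 1) + r\<close> with \<open>1 \<le> r \<le> k\<close>. Then \<open>\<rho> ^ j = \<rho> ^ r\<close> and the
  angle \<open>j \<theta> / N\<close> lies within \<open>\<theta> / M\<close> of \<open>m \<theta> / M\<close>. For \<open>r < k\<close> the points
  \<open>\<rho> ^ r * cis \<psi>\<close> with \<open>0 \<le> \<psi> \<le> \<theta>\<close> stay away from 1, so these factors change only by a
  relative error \<open>O(1 / M)\<close>. Grouping the \<open>k\<close> factors of each block by
  \<open>\<Prod>r. \<bar>\<rho> ^ r * z - 1\<bar> = \<bar>z ^ k - 1\<bar>\<close> reduces the product, up to a bounded factor, to
  \<open>\<Prod>m. inverse \<bar>cis (m \<alpha> / M) - 1\<bar> = exp (\<Sum>m. Cl2' (m \<alpha> / M))\<close> with \<open>\<alpha> = k \<theta>\<close>, where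
  \<open>Cl2' x = - ln \<bar>1 - cis x\<bar>\<close> is the derivative of \<open>Cl2\<close> on \<open>(0, 2\<pi>)\<close>. Since \<open>Cl2'\<close> is
  convex (the sine is log-concave), the midpoint rule bounds this Riemann sum by
  \<open>M Cl2 \<alpha> / \<alpha> + ln M + O(1)\<close>. The derivative of \<open>Cl2\<close> comes from the Abel means
  \<open>\<Sum>n. r ^ n sin (n t) / n\<^sup>2\<close>, whose derivatives \<open>- ln \<bar>1 - r cis t\<bar>\<close> converge locally
  uniformly on \<open>(0, 2\<pi>)\<close> as \<open>r \<rightarrow> 1\<close>. The argument gives the bound even with \<open>N\<close> in place
  of \<open>N ^ (4 k)\<close>.
\<close>

section \<open>Chords of the unit circle\<close>

lemma norm_1_minus_cis: "cmod (1 - cis x) = 2 * \<bar>sin (x / 2)\<bar>"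
  using dist_exp_i_1[of x] by (simp add: cis_conv_exp norm_minus_commute)

lemma norm_1_minus_cis_pos:
  assumes "0 < x" "x < 2 * pi"
  shows "0 < cmod (1 - cis x)"
proof -
  have "0 < sin (x / 2)" using assms by (intro sin_gt_zero) auto
  then show ?thesis by (simp add: norm_1_minus_cis)
qed

lemma norm_cis_diff_le: "cmod (cis a - cis b) \<le> \<bar>a - b\<bar>"
proof -
  have "cis a - cis b = - cis b * (1 - cis (a - b))"
    by (simp add: algebra_simps cis_mult)
  then have "cmod (cis a - cis b) = 2 * \<bar>sin ((a - b) / 2)\<bar>"
    by (simp add: norm_mult norm_1_minus_cis)
  also have "\<dots> \<le> 2 * \<bar>(a - b) / 2\<bar>"
    using abs_sin_x_le_abs_x[of "(a - b) / 2"] by linarith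
  finally show ?thesis by simp
qed

lemma norm_1_minus_rcis_squared:
  "(cmod (1 - of_real r * cis x))\<^sup>2 = 1 - 2 * r * cos x + r\<^sup>2"
proof -
  have "(cmod (1 - of_real r * cis x))\<^sup>2 = (1 - r * cos x)\<^sup>2 + (r * sin x)\<^sup>2"
    by (simp add: cmod_power2)
  also have "\<dots> = 1 - 2 * r * cos x + r\<^sup>2"
    using sin_cos_squared_add[of x] by algebra
  finally show ?thesis .
qed

lemma sin_ge_half:
  fixes y :: real
  assumes "0 \<le> y" "y \<le> 1"
  shows "y / 2 \<le> sin y"
proof -
  have "sin 0 - 0 / 2 \<le> sin y - y / 2"
  proof (rule DERIV_nonneg_imp_increasing_open[OF assms(1)])
    fix u assume u: "0 < u" "u < y"
    have "cos (pi / 3) \<le> cos u"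
      using u assms pi_gt3 by (intro cos_monotone_0_pi_le) auto
    then have "0 \<le> cos u - 1 / 2" by (simp add: cos_60)
    moreover have "((\<lambda>u. sin u - u / 2) has_real_derivative cos u - 1 / 2) (at u)"
      by (auto intro!: derivative_eq_intros)
    ultimately show "\<exists>d. ((\<lambda>u. sin u - u / 2) has_real_derivative d) (at u) \<and> 0 \<le> d"
      by blast
  qed (auto intro!: continuous_intros)
  then show ?thesis by simp
qed

section \<open>The derivative of the Clausen function\<close>

text \<open>\<open>Cl2' x = - ln \<bar>2 sin (x / 2)\<bar>\<close>; at multiples of \<open>2\<pi>\<close> it is the junk value \<open>- ln 0 = 0\<close>.\<close>

definition Cl2' :: "real \<Rightarrow> real" where
  "Cl2' x = - ln (cmod (1 - cis x))"

lemma Cl2'_ge: "- ln 2 \<le> Cl2' x"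
proof (cases "cmod (1 - cis x) = 0")
  case False
  have "cmod (1 - cis x) \<le> 2"
    using abs_sin_le_one[of "x / 2"] by (simp add: norm_1_minus_cis)
  with False show ?thesis by (simp add: Cl2'_def)
qed (simp add: Cl2'_def)

lemma Cl2'_le_ln:
  assumes "0 < h" "h \<le> 1"
  shows "Cl2' h \<le> ln (2 / h)"
proof -
  have "h / 2 \<le> 2 * sin (h / 2)"
    using sin_ge_half[of "h / 2"] assms by simp
  also have "\<dots> = cmod (1 - cis h)"
    using assms pi_gt3 by (simp add: norm_1_minus_cis sin_ge_zero)
  finally have "ln (h / 2) \<le> ln (cmod (1 - cis h))"
    using assms by (intro ln_mono) auto
  then show ?thesis using assms by (simp add: Cl2'_def ln_div)
qed

lemma Cl2'_midpoint_convex: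
  assumes "0 \<le> t" "0 < x - t" "x + t < 2 * pi"
  shows "2 * Cl2' x \<le> Cl2' (x + t) + Cl2' (x - t)"
proof -
  have pos: "0 < cmod (1 - cis (x + t))" "0 < cmod (1 - cis (x - t))"
    by (rule norm_1_minus_cis_pos; use assms in linarith)+
  have "sin ((x + t) / 2) * sin ((x - t) / 2) = (cos t - cos x) / 2"
    by (simp add: sin_times_sin diff_divide_distrib add_divide_distrib)
  also have "\<dots> \<le> (1 - cos x) / 2" by simp
  also have "\<dots> = sin (x / 2) * sin (x / 2)"
    by (simp add: sin_times_sin)
  finally have "sin ((x + t) / 2) * sin ((x - t) / 2) \<le> sin (x / 2) * sin (x / 2)" .
  moreover have "0 \<le> sin ((x + t) / 2)" "0 \<le> sin ((x - t) / 2)"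
    using assms by (auto intro!: sin_ge_zero)
  ultimately have "cmod (1 - cis (x + t)) * cmod (1 - cis (x - t)) \<le> (cmod (1 - cis x))\<^sup>2"
    by (simp add: norm_1_minus_cis power2_eq_square)
  then have "ln (cmod (1 - cis (x + t)) * cmod (1 - cis (x - t))) \<le> ln ((cmod (1 - cis x))\<^sup>2)"
    using pos by (intro ln_mono) auto
  then have "ln (cmod (1 - cis (x + t))) + ln (cmod (1 - cis (x - t))) \<le> 2 * ln (cmod (1 - cis x))"
    using pos by (simp add: ln_mult ln_realpow)
  then show ?thesis by (simp add: Cl2'_def)
qed

lemma summable_inverse_Suc_squared: "summable (\<lambda>n. 1 / (real (Suc n))\<^sup>2)"
proof -
  have "summable (\<lambda>n. inverse (real n ^ 2))" by (rule inverse_power_summable) simp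
  then show ?thesis by (subst (asm) summable_Suc_iff[symmetric]) (simp add: divide_inverse)
qed

text \<open>Abel means of the Clausen series; for \<open>r < 1\<close> the series can be differentiated termwise.\<close>

definition Cl2_abel :: "real \<Rightarrow> real \<Rightarrow> real" where
  "Cl2_abel r t = (\<Sum>n. r ^ Suc n * sin (real (Suc n) * t) / (real (Suc n))\<^sup>2)"

lemma Cl2_abel_1: "Cl2_abel 1 t = Cl2 t"
  by (simp add: Cl2_abel_def Cl2_def)

lemma continuous_on_Cl2_abel: "continuous_on ({0..1} \<times> UNIV) (\<lambda>p. Cl2_abel (fst p) (snd p))"
proof -
  let ?f = "\<lambda>n p. fst p ^ Suc n * sin (real (Suc n) * snd p) / (real (Suc n))\<^sup>2"
  have "uniform_limit ({0..1} \<times> UNIV) (\<lambda>n p. \<Sum>i<n. ?f i p) (\<lambda>p. \<Sum>i. ?f i p) sequentially"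
  proof (rule Weierstrass_m_test[OF _ summable_inverse_Suc_squared])
    fix n and p :: "real \<times> real" assume "p \<in> {0..1} \<times> UNIV"
    then have "\<bar>fst p ^ Suc n * sin (real (Suc n) * snd p)\<bar> \<le> 1"
      by (auto simp: abs_mult power_abs intro!: mult_le_one power_le_one)
    then show "norm (?f n p) \<le> 1 / (real (Suc n))\<^sup>2"
      by (simp add: abs_divide divide_right_mono)
  qed
  then show ?thesis unfolding Cl2_abel_def
    by (rule uniform_limit_theorem[rotated]) (auto intro!: always_eventually continuous_intros)
qed

lemma continuous_on_Cl2 [continuous_intros]:
  assumes "continuous_on A f"
  shows "continuous_on A (\<lambda>x. Cl2 (f x))"
proof -
  have "continuous_on A (\<lambda>x. Cl2_abel 1 (f x))"
    by (rule continuous_on_compose2[OF continuous_on_Cl2_abel, of _ "\<lambda>x. (1, f x)", simplified])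
       (auto intro!: continuous_intros assms)
  then show ?thesis by (simp add: Cl2_abel_1)
qed

lemma continuous_on_Cl2_abel_radius: "continuous_on {0..1} (\<lambda>r. Cl2_abel r t)"
  by (rule continuous_on_compose2[OF continuous_on_Cl2_abel, of _ "\<lambda>r. (r, t)", simplified])
     (auto intro!: continuous_intros)

lemma sums_neg_ln_norm_1_minus_rcis:
  assumes "0 \<le> r" "r < 1"
  shows "(\<lambda>n. r ^ Suc n * cos (real (Suc n) * t) / real (Suc n))
           sums (- ln (cmod (1 - of_real r * cis t)))"
proof -
  define w where "w = of_real r * cis t"
  have w: "norm w < 1" using assms by (simp add: w_def norm_mult)
  have "(\<lambda>n. - ((- (- w)) ^ n) / of_nat n) sums Ln (1 + - w)"
    by (rule Ln_series') (use w in simp)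
  then have "(\<lambda>n. Re (- (w ^ n) / of_nat n)) sums Re (Ln (1 - w))"
    by (intro sums_Re) simp
  moreover have "1 - w \<noteq> 0" using w by auto
  ultimately have "(\<lambda>n. - (r ^ n * cos (real n * t)) / real n) sums ln (cmod (1 - w))"
    by (simp add: w_def power_mult_distrib Complex.DeMoivre Re_divide_of_nat flip: of_real_power)
  then have "(\<lambda>n. - (r ^ Suc n * cos (real (Suc n) * t)) / real (Suc n)) sums ln (cmod (1 - w))"
    by (subst sums_Suc_iff) simp
  from sums_minus[OF this] show ?thesis by (simp add: w_def)
qed

lemma has_real_derivative_Cl2_abel:
  assumes "0 \<le> r" "r < 1"
  shows "((\<lambda>t. Cl2_abel r t) has_real_derivative - ln (cmod (1 - of_real r * cis t))) (at t)"
proof -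
  let ?f = "\<lambda>n t. r ^ Suc n * sin (real (Suc n) * t) / (real (Suc n))\<^sup>2"
  let ?f' = "\<lambda>n t. r ^ Suc n * cos (real (Suc n) * t) / real (Suc n)"
  have "(?f n has_real_derivative ?f' n x) (at x within UNIV)" for n x
    by (auto intro!: derivative_eq_intros simp: power2_eq_square)
  moreover have "uniformly_convergent_on UNIV (\<lambda>n x. \<Sum>i<n. ?f' i x)"
  proof (rule Weierstrass_m_test')
    show "summable (\<lambda>n. r ^ Suc n)" using assms by (simp add: summable_geometric)
    fix n x
    have "\<bar>cos (real (Suc n) * x)\<bar> \<le> real (Suc n)"
      by (rule order_trans[OF abs_cos_le_one]) simp
    then have "\<bar>cos (real (Suc n) * x)\<bar> / real (Suc n) \<le> 1"
      by (simp add: divide_le_eq_1_pos)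
    then have "r ^ Suc n * (\<bar>cos (real (Suc n) * x)\<bar> / real (Suc n)) \<le> r ^ Suc n * 1"
      using assms by (intro mult_left_mono) auto
    then show "norm (?f' n x) \<le> r ^ Suc n"
      using assms by (simp add: abs_mult abs_divide)
  qed
  ultimately have "((\<lambda>x. \<Sum>n. ?f n x) has_real_derivative (\<Sum>n. ?f' n t)) (at t)"
    by (intro has_field_derivative_series'(2)[OF convex_UNIV, of _ _ 0]) auto
  then show ?thesis
    using sums_neg_ln_norm_1_minus_rcis[OF assms] by (simp add: Cl2_abel_def sums_iff)
qed

lemma abs_ln_diff_le:
  fixes a b :: real
  assumes "0 < a" "0 < b"
  shows "\<bar>ln a - ln b\<bar> \<le> \<bar>a - b\<bar> / min a b"
proof -
  have "ln (a / b) \<le> a / b - 1" "ln (b / a) \<le> b / a - 1"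
    using assms by (auto intro!: ln_le_minus_one)
  then have "ln a - ln b \<le> (a - b) / b" "ln b - ln a \<le> (b - a) / a"
    using assms by (simp_all add: ln_div diff_divide_distrib)
  moreover have "(a - b) / b \<le> \<bar>a - b\<bar> / min a b" "(b - a) / a \<le> \<bar>a - b\<bar> / min a b"
    using assms by (auto intro!: frac_le)
  ultimately show ?thesis by linarith
qed

lemma Cl2_abel_deriv_approx:
  assumes r: "1 / 2 \<le> r" "r \<le> 1" and c: "0 < c" "c \<le> cmod (1 - cis t)"
  shows "\<bar>- ln (cmod (1 - of_real r * cis t)) - Cl2' t\<bar> \<le> 2 * (1 - r) / c"
proof -
  define A where "A = cmod (1 - of_real r * cis t)"
  define B where "B = cmod (1 - cis t)"
  have A2: "A\<^sup>2 = 1 - 2 * r * cos t + r\<^sup>2"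
    by (simp add: A_def norm_1_minus_rcis_squared)
  have B2: "B\<^sup>2 = 2 - 2 * cos t"
    using norm_1_minus_rcis_squared[of 1 t] by (simp add: B_def)
  have "A\<^sup>2 = (1 - r)\<^sup>2 + r * B\<^sup>2"
    unfolding A2 B2 by (simp add: power2_eq_square algebra_simps)
  also have "\<dots> \<ge> (B / 2)\<^sup>2"
  proof -
    have "1 / 4 * B\<^sup>2 \<le> r * B\<^sup>2" using r by (intro mult_right_mono) auto
    then show ?thesis by (simp add: power_divide) (use zero_le_power2[of "1 - r"] in linarith)
  qed
  finally have "B / 2 \<le> A" by (rule power2_le_imp_le) (simp add: A_def)
  then have AB: "0 < A" "c / 2 \<le> min A B" using c by (auto simp: B_def)
  have "\<bar>A - B\<bar> \<le> cmod ((1 - of_real r * cis t) - (1 - cis t))"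
    unfolding A_def B_def by (rule norm_triangle_ineq3)
  also have "(1 - of_real r * cis t) - (1 - cis t) = of_real (1 - r) * cis t"
    by (simp add: algebra_simps)
  also have "cmod (of_real (1 - r) * cis t) = 1 - r"
    using r by (simp only: norm_mult norm_of_real norm_cis) simp
  finally have "\<bar>A - B\<bar> \<le> 1 - r" .
  have "\<bar>ln A - ln B\<bar> \<le> \<bar>A - B\<bar> / min A B"
    using AB c by (intro abs_ln_diff_le) (auto simp: B_def)
  moreover have "\<bar>A - B\<bar> / min A B \<le> (1 - r) / (c / 2)"
    using AB c r \<open>\<bar>A - B\<bar> \<le> 1 - r\<close> by (intro frac_le) auto
  ultimately have "\<bar>ln A - ln B\<bar> \<le> (1 - r) / (c / 2)"
    by linarith
  then show ?thesis by (simp add: Cl2'_def A_def B_def abs_minus_commute mult.commute)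
qed

lemma norm_1_minus_cis_bounded_below:
  assumes "0 < a" "a \<le> b" "b < 2 * pi"
  obtains c where "0 < c" "\<And>t. t \<in> {a..b} \<Longrightarrow> c \<le> cmod (1 - cis t)"
proof -
  have "\<exists>t0\<in>{a..b}. \<forall>t\<in>{a..b}. cmod (1 - cis t0) \<le> cmod (1 - cis t)"
    using assms by (intro continuous_attains_inf) (auto intro!: continuous_intros)
  then obtain t0 where t0: "t0 \<in> {a..b}" "\<And>t. t \<in> {a..b} \<Longrightarrow> cmod (1 - cis t0) \<le> cmod (1 - cis t)"
    by blast
  have "0 < cmod (1 - cis t0)"
    using t0(1) assms by (intro norm_1_minus_cis_pos) auto
  with t0 that show ?thesis by blast
qed

lemma Cl2_abel_deriv_uniform_approx:
  assumes c: "0 < c" "\<And>t. t \<in> S \<Longrightarrow> c \<le> cmod (1 - cis t)"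
    and r: "r \<longlonglongrightarrow> 1" "\<And>n. 1 / 2 \<le> r n" "\<And>n. r n \<le> 1" and "0 < e"
  shows "\<forall>\<^sub>F n in sequentially. \<forall>t\<in>S. \<forall>h.
           norm (- ln (cmod (1 - of_real (r n) * cis t)) * h - Cl2' t * h) \<le> e * norm h"
proof -
  have "(\<lambda>n. 2 * (1 - r n) / c) \<longlonglongrightarrow> 2 * (1 - 1) / c"
    using c by (intro tendsto_intros r) auto
  then have "\<forall>\<^sub>F n in sequentially. 2 * (1 - r n) / c < e"
    using \<open>0 < e\<close> by (simp add: order_tendsto_iff)
  then show ?thesis
  proof eventually_elim
    case (elim n)
    show ?case
    proof (intro ballI allI)
      fix t h assume "t \<in> S"
      then have "\<bar>- ln (cmod (1 - of_real (r n) * cis t)) - Cl2' t\<bar> \<le> e"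
        using Cl2_abel_deriv_approx[of "r n" c t] r(2,3)[of n] c elim by auto
      then have "\<bar>(- ln (cmod (1 - of_real (r n) * cis t)) - Cl2' t) * h\<bar> \<le> e * \<bar>h\<bar>"
        by (simp add: abs_mult mult_right_mono)
      then show "norm (- ln (cmod (1 - of_real (r n) * cis t)) * h - Cl2' t * h) \<le> e * norm h"
        by (simp add: left_diff_distrib)
    qed
  qed
qed

lemma has_real_derivative_Cl2:
  assumes x: "0 < x" "x < 2 * pi"
  shows "(Cl2 has_real_derivative Cl2' x) (at x)"
proof -
  define S where "S = {x / 2..(x + 2 * pi) / 2}"
  have xS: "x \<in> S" "x \<in> interior S" "convex S" using x by (auto simp: S_def)
  obtain c where c: "0 < c" "\<And>t. t \<in> S \<Longrightarrow> c \<le> cmod (1 - cis t)"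
    using norm_1_minus_cis_bounded_below[of "x / 2" "(x + 2 * pi) / 2"] x by (auto simp: S_def)
  define r :: "nat \<Rightarrow> real" where "r n = 1 - inverse (real (Suc n)) / 2" for n
  have r: "1 / 2 \<le> r n" "r n < 1" "r n \<in> {0..1}" for n
    using inverse_le_1_iff[of "real (Suc n)"] by (auto simp: r_def)
  have "r \<longlonglongrightarrow> 1 - 0 / 2"
    unfolding r_def[abs_def] by (intro tendsto_intros LIMSEQ_inverse_real_of_nat) simp
  then have r_lim: "r \<longlonglongrightarrow> 1" by simp
  have derf: "(Cl2_abel (r n) has_derivative (*) (- ln (cmod (1 - of_real (r n) * cis t)))) (at t within S)"
    for n t
    using has_real_derivative_Cl2_abel[of "r n" t] r[of n] unfolding has_field_derivative_def
    by (auto intro: has_derivative_at_withinI)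
  have flim: "(\<lambda>n. Cl2_abel (r n) t) \<longlonglongrightarrow> Cl2 t" for t
    using continuous_on_tendsto_compose[OF continuous_on_Cl2_abel_radius r_lim _ always_eventually] r(3)
    by (simp add: Cl2_abel_1)
  obtain g where
    g: "\<And>t. t \<in> S \<Longrightarrow> (\<lambda>n. Cl2_abel (r n) t) \<longlonglongrightarrow> g t \<and> (g has_derivative (*) (Cl2' t)) (at t within S)"
  proof (rule has_derivative_sequence[OF xS(3) derf _ xS(1) flim, THEN exE])
    show "\<forall>\<^sub>F n in sequentially. \<forall>t\<in>S. \<forall>h.
            norm (- ln (cmod (1 - of_real (r n) * cis t)) * h - Cl2' t * h) \<le> e * norm h"
      if "0 < e" for e
      using Cl2_abel_deriv_uniform_approx[OF c r_lim r(1) less_imp_le[OF r(2)] that] .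
  qed blast
  have "Cl2 t = g t" if "t \<in> S" for t
    using LIMSEQ_unique g[OF that] flim by blast
  then have "(Cl2 has_derivative (*) (Cl2' x)) (at x within S)"
    using has_derivative_transform[OF xS(1)] g[OF xS(1)] by blast
  then show ?thesis
    using at_within_interior[OF xS(2)] by (simp add: has_field_derivative_def)
qed

section \<open>Riemann sums of \<open>Cl2'\<close>\<close>

lemma Cl2_0: "Cl2 0 = 0"
  by (simp add: Cl2_def)

text \<open>The midpoint rule underestimates the integral of the convex function \<open>Cl2'\<close>.\<close>

lemma Cl2_diff_ge_midpoint:
  assumes "0 \<le> h" "0 < x - h" "x + h < 2 * pi"
  shows "2 * h * Cl2' x \<le> Cl2 (x + h) - Cl2 (x - h)"
proof -
  let ?\<phi> = "\<lambda>t. Cl2 (x + t) - Cl2 (x - t) - 2 * t * Cl2' x"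
  have "?\<phi> 0 \<le> ?\<phi> h"
  proof (rule DERIV_nonneg_imp_increasing_open[OF assms(1)])
    fix t assume t: "0 < t" "t < h"
    have "(?\<phi> has_real_derivative Cl2' (x + t) + Cl2' (x - t) - 2 * Cl2' x) (at t)"
      using assms t
      by (auto intro!: derivative_eq_intros DERIV_chain2[OF has_real_derivative_Cl2])
    moreover have "0 \<le> Cl2' (x + t) + Cl2' (x - t) - 2 * Cl2' x"
      using Cl2'_midpoint_convex[of t x] assms t by simp
    ultimately show "\<exists>d. (?\<phi> has_real_derivative d) (at t) \<and> 0 \<le> d" by blast
  qed (auto intro!: continuous_intros)
  then show ?thesis by simp
qed

lemma Cl2_diff_ge:
  assumes "0 \<le> a" "a \<le> b" "b < 2 * pi"
  shows "- (b - a) * ln 2 \<le> Cl2 b - Cl2 a"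
proof -
  let ?\<phi> = "\<lambda>t. Cl2 t + t * ln 2"
  have "?\<phi> a \<le> ?\<phi> b"
  proof (rule DERIV_nonneg_imp_increasing_open[OF assms(2)])
    fix t assume t: "a < t" "t < b"
    have "(?\<phi> has_real_derivative Cl2' t + ln 2) (at t)"
      using assms t by (auto intro!: derivative_eq_intros has_real_derivative_Cl2)
    moreover have "0 \<le> Cl2' t + ln 2" using Cl2'_ge[of t] by simp
    ultimately show "\<exists>d. (?\<phi> has_real_derivative d) (at t) \<and> 0 \<le> d" by blast
  qed (auto intro!: continuous_intros)
  then show ?thesis by (simp add: algebra_simps)
qed

lemma sum_Cl2'_le_Cl2:
  assumes h: "0 < h" and M: "2 \<le> M" "real M * h < 2 * pi"
  shows "h * (\<Sum>m=2..<M. Cl2' (real m * h)) \<le> Cl2 (real M * h) + 2 * h * ln 2"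
proof -
  define F where "F i = Cl2 ((real i - 1 / 2) * h)" for i :: nat
  have "h * Cl2' (real m * h) \<le> F (Suc m) - F m" if "m \<in> {2..<M}" for m
  proof -
    have "real (Suc m) \<le> real M" using that by simp
    then have "(real m + 1 / 2) * h < real M * h" using h by (intro mult_strict_right_mono) auto
    then have "real m * h + h / 2 < real M * h" by (simp add: algebra_simps)
    then show ?thesis
      using Cl2_diff_ge_midpoint[of "h / 2" "real m * h"] that h M
      by (simp add: F_def algebra_simps)
  qed
  then have "h * (\<Sum>m=2..<M. Cl2' (real m * h)) \<le> (\<Sum>m=2..<M. F (Suc m) - F m)"
    unfolding sum_distrib_left by (intro sum_mono) auto
  also have "\<dots> = F M - F 2" using M by (intro sum_Suc_diff') auto
  finally have "h * (\<Sum>m=2..<M. Cl2' (real m * h)) \<le> F M - F 2" .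
  moreover have "F M \<le> Cl2 (real M * h) + h / 2 * ln 2"
    using Cl2_diff_ge[of "(real M - 1 / 2) * h" "real M * h"] h M by (simp add: F_def algebra_simps)
  moreover have "- F 2 \<le> 3 / 2 * h * ln 2"
  proof -
    have "2 * h \<le> real M * h" using h M by (intro mult_right_mono) auto
    then have "3 / 2 * h < 2 * pi" using h M by linarith
    then show ?thesis
      using Cl2_diff_ge[of 0 "3 / 2 * h"] h by (simp add: F_def Cl2_0)
  qed
  ultimately show ?thesis by linarith
qed

lemma sum_Cl2'_equidistant_le:
  assumes \<alpha>: "0 < \<alpha>" "\<alpha> < 2 * pi" and M: "2 \<le> M" "\<alpha> \<le> real M"
  shows "(\<Sum>m=1..M. Cl2' (real m * \<alpha> / real M)) \<le> ln (8 / \<alpha> * real M) + Cl2' \<alpha> + real M * (Cl2 \<alpha> / \<alpha>)"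
proof -
  define h where "h = \<alpha> / real M"
  have h: "0 < h" "h \<le> 1" "real M * h = \<alpha>" using \<alpha> M by (auto simp: h_def field_simps)
  have "{1..M} = insert 1 (insert M {2..<M})" using M by auto
  then have "(\<Sum>m=1..M. Cl2' (real m * h)) = Cl2' h + (Cl2' (real M * h) + (\<Sum>m=2..<M. Cl2' (real m * h)))"
    using M by (simp only:) (subst sum.insert; simp)+
  also have "\<dots> \<le> (ln (2 / h) + 2 * ln 2) + Cl2' \<alpha> + real M * (Cl2 \<alpha> / \<alpha>)"
  proof -
    have "h * (real M * (Cl2 \<alpha> / \<alpha>)) = Cl2 \<alpha>"
      using h(3) \<alpha> by (simp add: field_simps)
    then have "h * (\<Sum>m=2..<M. Cl2' (real m * h)) \<le> h * (real M * (Cl2 \<alpha> / \<alpha>) + 2 * ln 2)"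
      using sum_Cl2'_le_Cl2[of h M] h M \<alpha> by (simp add: distrib_left)
    then show ?thesis using Cl2'_le_ln[OF h(1,2)] h by (simp add: mult_le_cancel_left_pos)
  qed
  also have "ln (2 / h) + 2 * ln 2 = ln (8 / \<alpha> * real M)"
  proof -
    have "ln (4 :: real) = 2 * ln 2" using ln_realpow[of 2 2] by simp
    then have "ln (2 / h) + 2 * ln 2 = ln (2 / h * 4)"
      using h(1) ln_mult[of "2 / h" 4] by simp
    also have "2 / h * 4 = 8 / \<alpha> * real M" by (simp add: h_def)
    finally show ?thesis .
  qed
  finally show ?thesis by (simp add: h_def times_divide_eq_right)
qed

lemma prod_inverse_norm_cis_minus_1_le:
  assumes \<alpha>: "0 < \<alpha>" "\<alpha> < 2 * pi" and M: "2 \<le> M" "\<alpha> \<le> real M"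
  shows "(\<Prod>m=1..M. inverse (cmod (cis (real m * \<alpha> / real M) - 1)))
           \<le> 8 / \<alpha> * exp (Cl2' \<alpha>) * real M * exp (real M * (Cl2 \<alpha> / \<alpha>))"
proof -
  have "inverse (cmod (cis (real m * \<alpha> / real M) - 1)) = exp (Cl2' (real m * \<alpha> / real M))"
    if "m \<in> {1..M}" for m
  proof -
    have "real m * \<alpha> / real M \<le> \<alpha>" using that \<alpha> by (simp add: field_simps mult_right_mono)
    then have "0 < cmod (1 - cis (real m * \<alpha> / real M))"
      using that \<alpha> by (intro norm_1_minus_cis_pos) auto
    then show ?thesis by (simp add: Cl2'_def norm_minus_commute exp_minus)
  qed
  then have "(\<Prod>m=1..M. inverse (cmod (cis (real m * \<alpha> / real M) - 1)))
               = exp (\<Sum>m=1..M. Cl2' (real m * \<alpha> / real M))"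
    by (simp add: exp_sum)
  also have "\<dots> \<le> exp (ln (8 / \<alpha> * real M) + Cl2' \<alpha> + real M * (Cl2 \<alpha> / \<alpha>))"
    using sum_Cl2'_equidistant_le[OF assms] by simp
  also have "\<dots> = 8 / \<alpha> * exp (Cl2' \<alpha>) * real M * exp (real M * (Cl2 \<alpha> / \<alpha>))"
    using \<alpha> M by (simp add: exp_add)
  finally show ?thesis .
qed

section \<open>Primitive roots of unity\<close>

lemma primitive_root_unity_nonzero:
  assumes "primitive_root_unity k \<rho>"
  shows "\<rho> \<noteq> 0"
  using assms by (auto simp: primitive_root_unity_def power_0_left)

lemma primitive_root_unity_norm:
  assumes "primitive_root_unity k \<rho>"
  shows "cmod \<rho> = 1"
proof -
  have k: "k \<ge> 1" "\<rho> ^ k = 1" using assms by (auto simp: primitive_root_unity_def)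
  then have "cmod (\<rho> ^ k) = 1" by simp
  then have "cmod \<rho> ^ k = 1 ^ k" by (simp add: norm_power)
  then show ?thesis using k(1) power_eq_imp_eq_base[of "cmod \<rho>" k 1] by simp
qed

lemma inj_on_primitive_root_powers:
  assumes "primitive_root_unity k \<rho>"
  shows "inj_on (\<lambda>r. \<rho> ^ r) {1..k}"
proof (rule linorder_inj_onI')
  fix i j assume ij: "i \<in> {1..k}" "j \<in> {1..k}" "i < j"
  have "\<rho> ^ j = \<rho> ^ i * \<rho> ^ (j - i)" using ij(3) by (simp flip: power_add)
  moreover have "\<rho> ^ (j - i) \<noteq> 1" using assms ij by (auto simp: primitive_root_unity_def)
  ultimately show "\<rho> ^ i \<noteq> \<rho> ^ j"
    using primitive_root_unity_nonzero[OF assms] by auto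
qed

lemma prod_minus_primitive_root_powers:
  assumes "primitive_root_unity k \<rho>"
  shows "(\<Prod>r=1..k. w - \<rho> ^ r) = w ^ k - 1"
proof -
  define p where "p = (\<Prod>r=1..k. [:- (\<rho> ^ r), 1:])"
  define q :: "complex poly" where "q = monom 1 k - 1"
  have k: "1 \<le> k" "\<rho> ^ k = 1" using assms by (auto simp: primitive_root_unity_def)
  have "p = q"
  proof (rule poly_eqI_degree_lead_coeff[of p k q "(\<lambda>r. \<rho> ^ r) ` {1..k}"])
    have "degree p = k" unfolding p_def by (subst degree_prod_eq_sum_degree) auto
    moreover have "lead_coeff p = 1" unfolding p_def by (simp add: lead_coeff_prod)
    ultimately show "coeff p k = coeff q k" "degree p \<le> k"
      using k by (simp_all add: q_def coeff_monom)
    show "degree q \<le> k" unfolding q_def by (intro degree_diff_le degree_monom_le) auto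
    show "k \<le> card ((\<lambda>r. \<rho> ^ r) ` {1..k})"
      using card_image[OF inj_on_primitive_root_powers[OF assms]] by simp
  next
    fix z assume "z \<in> (\<lambda>r. \<rho> ^ r) ` {1..k}"
    then obtain s where s: "s \<in> {1..k}" "z = \<rho> ^ s" by auto
    then have "poly p z = 0" by (auto simp: p_def poly_prod)
    moreover have "z ^ k = 1" using s k by (simp flip: power_mult add: power_mult[of \<rho> k s] mult.commute)
    ultimately show "poly p z = poly q z" by (simp add: q_def poly_monom)
  qed
  then have "poly p w = poly q w" by simp
  then show ?thesis by (simp add: p_def q_def poly_prod poly_monom)
qed

lemma prod_norm_primitive_root_powers:
  assumes "primitive_root_unity k \<rho>" "cmod z = 1"
  shows "(\<Prod>r=1..k. cmod (\<rho> ^ r * z - 1)) = cmod (z ^ k - 1)"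
proof -
  have z: "z * cnj z = 1" using complex_norm_square[of z] assms(2) by simp
  have "cmod (\<rho> ^ r * z - 1) = cmod (cnj z - \<rho> ^ r)" for r
  proof -
    have "\<rho> ^ r * z - 1 = z * (\<rho> ^ r - cnj z)" using z by (simp add: algebra_simps)
    then show ?thesis using assms(2) by (simp add: norm_mult norm_minus_commute)
  qed
  then have "(\<Prod>r=1..k. cmod (\<rho> ^ r * z - 1)) = cmod (\<Prod>r=1..k. cnj z - \<rho> ^ r)"
    by (simp add: prod_norm)
  also have "\<dots> = cmod (cnj (z ^ k - 1))"
    unfolding prod_minus_primitive_root_powers[OF assms(1)] by simp
  finally show ?thesis by (simp only: complex_mod_cnj)
qed

lemma primitive_root_powers_cis_bounded_away:
  assumes \<rho>: "primitive_root_unity k \<rho>" and \<theta>: "0 < \<theta>" "real k * \<theta> < 2 * pi"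
  obtains c where "0 < c" "\<And>r \<psi>. r \<in> {1..<k} \<Longrightarrow> \<psi> \<in> {0..\<theta>} \<Longrightarrow> c \<le> cmod (\<rho> ^ r * cis \<psi> - 1)"
proof -
  define S where "S = (\<Union>r\<in>{1..<k}. (\<lambda>\<psi>. \<rho> ^ r * cis \<psi>) ` {0..\<theta>})"
  have "compact S" unfolding S_def
    by (intro compact_UN finite_atLeastLessThan compact_continuous_image compact_Icc
          continuous_on_mult continuous_on_const continuous_on_cis continuous_on_id)
  moreover have "1 \<notin> S"
  proof
    assume "1 \<in> S"
    then obtain r \<psi> where r: "r \<in> {1..<k}" "\<psi> \<in> {0..\<theta>}" "\<rho> ^ r * cis \<psi> = 1"
      by (auto simp: S_def)
    have k: "\<rho> ^ k = 1" "\<rho> ^ r \<noteq> 1" using \<rho> r(1) by (auto simp: primitive_root_unity_def)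
    have "(\<rho> ^ r * cis \<psi>) ^ k = (\<rho> ^ k) ^ r * cis (real k * \<psi>)"
      by (simp add: power_mult_distrib Complex.DeMoivre flip: power_mult) (simp add: mult.commute)
    then have "cis (real k * \<psi>) = 1" using r(3) k(1) by simp
    moreover have "real k * \<psi> < 2 * pi"
      using r(2) \<theta> mult_left_mono[of \<psi> \<theta> "real k"] by auto
    ultimately have "\<not> 0 < real k * \<psi>"
      using norm_1_minus_cis_pos[of "real k * \<psi>"] by auto
    then have "\<psi> = 0" using r(1,2) by (simp add: zero_less_mult_iff)
    then show False using r(3) k(2) by simp
  qed
  ultimately obtain c where c: "0 < c" "\<forall>z\<in>S. c \<le> dist 1 z"
    using separate_point_closed[OF compact_imp_closed] by blast
  show ?thesis
  proof (rule that[OF c(1)])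
    fix r \<psi> assume "r \<in> {1..<k}" "\<psi> \<in> {0..\<theta>}"
    then have "\<rho> ^ r * cis \<psi> \<in> S" unfolding S_def by blast
    then have "c \<le> dist 1 (\<rho> ^ r * cis \<psi>)" using c(2) by blast
    then show "c \<le> cmod (\<rho> ^ r * cis \<psi> - 1)"
      by (simp add: dist_norm norm_minus_commute)
  qed
qed

section \<open>The twisted product\<close>

lemma prod_atLeastAtMost_blocks:
  fixes f :: "nat \<Rightarrow> 'a::comm_monoid_mult"
  shows "prod f {1..k * M} = (\<Prod>m=1..M. \<Prod>r=1..k. f (k * (m - 1) + r))"
proof (induction M)
  case (Suc M)
  have "prod f {1..k * M + k} = prod f {1..k * M} * prod f {k * M + 1..k * M + k}"
    by (rule prod.ub_add_nat) simp
  also have "prod f {k * M + 1..k * M + k} = (\<Prod>r=1..k. f (k * M + r))"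
    using prod.shift_bounds_cl_nat_ivl[of f 1 "k * M" k] by (simp add: add.commute)
  finally show ?case using Suc.IH by (simp add: algebra_simps)
qed simp

lemma norm_ge_one_minus_mult_norm:
  fixes a b :: "'a::real_normed_vector"
  assumes "c \<le> norm b" "norm (a - b) \<le> y * c" "0 \<le> y"
  shows "(1 - y) * norm b \<le> norm a"
proof -
  have "y * c \<le> y * norm b" using assms by (intro mult_left_mono)
  moreover have "norm b - norm a \<le> norm (a - b)"
    using norm_triangle_ineq2[of b a] by (simp add: norm_minus_commute)
  ultimately show ?thesis using assms(2) by (simp add: algebra_simps)
qed

lemma inverse_one_minus_power_le_exp:
  fixes y :: real
  assumes "0 \<le> y" "y \<le> 1 / 2"
  shows "inverse ((1 - y) ^ n) \<le> exp (2 * y * real n)"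
proof -
  have "- 2 * y \<le> - y - 2 * y\<^sup>2"
    using assms mult_left_mono[of y "1 / 2" "2 * y"] by (simp add: power2_eq_square)
  also have "\<dots> \<le> ln (1 - y)" by (rule ln_one_minus_pos_lower_bound) fact+
  finally have "exp (real n * (- 2 * y)) \<le> exp (real n * ln (1 - y))"
    by (intro exp_mono mult_left_mono) auto
  also have "\<dots> = (1 - y) ^ n" using assms by (simp add: exp_of_nat_mult)
  finally have "inverse ((1 - y) ^ n) \<le> inverse (exp (real n * (- 2 * y)))"
    by (intro le_imp_inverse_le) auto
  then show ?thesis by (simp add: exp_minus mult_ac)
qed

lemma norm_twisted_factor_ge:
  assumes \<rho>: "primitive_root_unity k \<rho>" and \<theta>: "0 < \<theta>"
    and c: "0 < c" "\<And>r \<psi>. r \<in> {1..<k} \<Longrightarrow> \<psi> \<in> {0..\<theta>} \<Longrightarrow> c \<le> cmod (\<rho> ^ r * cis \<psi> - 1)"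
    and m: "m \<in> {1..M}" and r: "r \<in> {1..k}"
  shows "(1 - \<theta> / (real M * c)) * cmod (\<rho> ^ r * cis (real m * \<theta> / real M) - 1)
           \<le> cmod (\<rho> ^ (k * (m - 1) + r) * exp (\<i> * of_real (real (k * (m - 1) + r) * \<theta> / real (k * M))) - 1)"
proof -
  txt \<open>The angle \<open>\<phi>\<close> of the \<open>j\<close>-th factor, \<open>j = k (m - 1) + r\<close>, lies in \<open>[\<psi> - \<theta> / M, \<psi>]\<close>.\<close>
  define \<psi> where "\<psi> = real m * \<theta> / real M"
  define \<phi> where "\<phi> = real (k * (m - 1) + r) * \<theta> / real (k * M)"
  define b where "b = \<rho> ^ r * cis \<psi> - 1"
  define y where "y = \<theta> / (real M * c)"
  have k: "real k > 0" "\<rho> ^ k = 1" using \<rho> by (auto simp: primitive_root_unity_def)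
  have M: "real M > 0" using m by simp
  have y: "0 \<le> y" using \<theta> c M by (simp add: y_def)
  have "\<rho> ^ (k * (m - 1) + r) = \<rho> ^ r"
    using k(2) by (simp add: power_add power_mult)
  then have lhs: "\<rho> ^ (k * (m - 1) + r) * exp (\<i> * of_real \<phi>) - 1 = \<rho> ^ r * cis \<phi> - 1"
    by (simp add: cis_conv_exp)
  have diff: "\<psi> - \<phi> = (real k - real r) * \<theta> / (real k * real M)"
    using m k M by (simp add: \<psi>_def \<phi>_def of_nat_diff field_simps)
  have "(real k - real r) * \<theta> / (real k * real M) \<le> real k * \<theta> / (real k * real M)"
    using r \<theta> k M by (intro divide_right_mono) auto
  then have d: "0 \<le> \<psi> - \<phi>" "\<psi> - \<phi> \<le> \<theta> / real M"
    using r \<theta> k M unfolding diff by auto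
  have "(1 - y) * cmod b \<le> cmod (\<rho> ^ r * cis \<phi> - 1)"
  proof (cases "r = k")
    case True
    then have "\<phi> = \<psi>" using diff by simp
    then show ?thesis using y by (simp add: b_def algebra_simps)
  next
    case False
    have "\<psi> \<in> {0..\<theta>}" using m \<theta> M by (auto simp: \<psi>_def field_simps)
    then have "c \<le> cmod b" using False r c(2) by (simp add: b_def)
    moreover have "cmod ((\<rho> ^ r * cis \<phi> - 1) - b) = cmod (cis \<phi> - cis \<psi>)"
      using primitive_root_unity_norm[OF \<rho>]
      by (simp add: b_def norm_mult norm_power flip: right_diff_distrib)
    then have "cmod ((\<rho> ^ r * cis \<phi> - 1) - b) \<le> y * c"
      using norm_cis_diff_le[of \<phi> \<psi>] d c M by (simp add: y_def)
    ultimately show ?thesis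
      using y by (intro norm_ge_one_minus_mult_norm)
  qed
  then show ?thesis using lhs by (simp add: b_def y_def \<psi>_def \<phi>_def)
qed

lemma prod_twisted_block_ge:
  assumes \<rho>: "primitive_root_unity k \<rho>" and \<theta>: "0 < \<theta>"
    and c: "0 < c" "\<And>r \<psi>. r \<in> {1..<k} \<Longrightarrow> \<psi> \<in> {0..\<theta>} \<Longrightarrow> c \<le> cmod (\<rho> ^ r * cis \<psi> - 1)"
    and m: "m \<in> {1..M}" and y: "\<theta> / (real M * c) \<le> 1"
  shows "(1 - \<theta> / (real M * c)) ^ k * cmod (cis (real m * (real k * \<theta>) / real M) - 1)
           \<le> (\<Prod>r=1..k. cmod (\<rho> ^ (k * (m - 1) + r)
                 * exp (\<i> * of_real (real (k * (m - 1) + r) * \<theta> / real (k * M))) - 1))"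
proof -
  have "(\<Prod>r=1..k. (1 - \<theta> / (real M * c)) * cmod (\<rho> ^ r * cis (real m * \<theta> / real M) - 1))
          \<le> (\<Prod>r=1..k. cmod (\<rho> ^ (k * (m - 1) + r)
                 * exp (\<i> * of_real (real (k * (m - 1) + r) * \<theta> / real (k * M))) - 1))"
    using norm_twisted_factor_ge[OF \<rho> \<theta> c m] y by (intro prod_mono) auto
  moreover have "(\<Prod>r=1..k. cmod (\<rho> ^ r * cis (real m * \<theta> / real M) - 1))
                   = cmod (cis (real m * (real k * \<theta>) / real M) - 1)"
    using prod_norm_primitive_root_powers[OF \<rho>, of "cis (real m * \<theta> / real M)"]
    by (simp add: Complex.DeMoivre field_simps)
  ultimately show ?thesis by (simp add: prod.distrib)
qed

lemma prod_inverse_twisted_le: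
  assumes \<rho>: "primitive_root_unity k \<rho>" and \<theta>: "0 < \<theta>" "real k * \<theta> < 2 * pi"
    and c: "0 < c" "\<And>r \<psi>. r \<in> {1..<k} \<Longrightarrow> \<psi> \<in> {0..\<theta>} \<Longrightarrow> c \<le> cmod (\<rho> ^ r * cis \<psi> - 1)"
    and M: "1 \<le> M" "2 * \<theta> / c \<le> real M"
  shows "(\<Prod>j=1..k * M. inverse (cmod (\<rho> ^ j * exp (\<i> * of_real (real j * \<theta> / real (k * M))) - 1)))
           \<le> exp (2 * real k * \<theta> / c)
             * (\<Prod>m=1..M. inverse (cmod (cis (real m * (real k * \<theta>) / real M) - 1)))"
proof -
  define A where "A j = cmod (\<rho> ^ j * exp (\<i> * of_real (real j * \<theta> / real (k * M))) - 1)" for j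
  define P where "P m = cmod (cis (real m * (real k * \<theta>) / real M) - 1)" for m
  define y where "y = \<theta> / (real M * c)"
  have k: "0 < k" using \<rho> by (simp add: primitive_root_unity_def)
  have y: "0 \<le> y" "y \<le> 1 / 2" using \<theta> c M by (auto simp: y_def field_simps)
  have P: "0 < P m" if "m \<in> {1..M}" for m
  proof -
    have "real m * (real k * \<theta>) \<le> real M * (real k * \<theta>)"
      using that \<theta> by (intro mult_right_mono) auto
    then have "real m * (real k * \<theta>) / real M \<le> real k * \<theta>"
      using M by (simp add: pos_divide_le_eq mult.commute)
    then show ?thesis
      using that \<theta> k norm_1_minus_cis_pos[of "real m * (real k * \<theta>) / real M"]
      by (simp add: P_def norm_minus_commute)
  qed
  have "(1 - y) ^ (k * M) * (\<Prod>m=1..M. P m) = (\<Prod>m=1..M. (1 - y) ^ k * P m)"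
    by (simp add: prod.distrib power_mult)
  also have "\<dots> \<le> (\<Prod>m=1..M. \<Prod>r=1..k. A (k * (m - 1) + r))"
  proof (rule prod_mono)
    fix m assume m: "m \<in> {1..M}"
    have "(1 - y) ^ k * P m \<le> (\<Prod>r=1..k. A (k * (m - 1) + r))"
      using prod_twisted_block_ge[OF \<rho> \<theta>(1) c m, folded y_def] y
      unfolding A_def P_def by simp
    then show "0 \<le> (1 - y) ^ k * P m \<and> (1 - y) ^ k * P m \<le> (\<Prod>r=1..k. A (k * (m - 1) + r))"
      using P[OF m] y by simp
  qed
  also have "\<dots> = (\<Prod>j=1..k * M. A j)" by (rule prod_atLeastAtMost_blocks[symmetric])
  finally have "inverse (\<Prod>j=1..k * M. A j) \<le> inverse ((1 - y) ^ (k * M) * (\<Prod>m=1..M. P m))"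
    using P y by (intro le_imp_inverse_le mult_pos_pos prod_pos zero_less_power) auto
  then have "(\<Prod>j=1..k * M. inverse (A j)) \<le> inverse ((1 - y) ^ (k * M)) * (\<Prod>m=1..M. inverse (P m))"
    using prod_inversef[of A "{1..k * M}"] prod_inversef[of P "{1..M}"]
    by (simp add: inverse_mult_distrib o_def)
  also have "inverse ((1 - y) ^ (k * M)) \<le> exp (2 * real k * \<theta> / c)"
    using inverse_one_minus_power_le_exp[OF y, of "k * M"] M c by (simp add: y_def field_simps)
  finally show ?thesis
    using P by (simp add: A_def P_def prod_nonneg mult_right_mono)
qed

lemma eventually_le_imp_le_const_mult:
  fixes f g :: "nat \<Rightarrow> real"
  assumes g: "\<And>n. 0 < g n" and ev: "eventually (\<lambda>n. f n \<le> C * g n) sequentially"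
  obtains D where "\<And>n. f n \<le> D * g n"
proof -
  obtain n0 where n0: "\<And>n. n \<ge> n0 \<Longrightarrow> f n \<le> C * g n"
    using ev by (auto simp: eventually_sequentially)
  define D where "D = max C (Max ((\<lambda>n. f n / g n) ` {..<n0}))"
  have "f n \<le> D * g n" for n
  proof (cases "n < n0")
    case True
    then have "f n / g n \<le> D" by (auto simp: D_def intro: max.coboundedI2)
    then show ?thesis using g[of n] by (simp add: pos_divide_le_eq)
  next
    case False
    then have "f n \<le> C * g n" using n0 by simp
    also have "\<dots> \<le> D * g n" using g[of n] by (intro mult_right_mono) (auto simp: D_def)
    finally show ?thesis .
  qed
  then show ?thesis using that by blast
qed

lemma prod_inverse_twisted_bound:
  assumes \<rho>: "primitive_root_unity k \<rho>" and \<theta>: "0 < \<theta>" "real k * \<theta> < 2 * pi"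
  obtains D where
    "\<And>M. (\<Prod>j=1..k * M. inverse (cmod (\<rho> ^ j * exp (\<i> * of_real (real j * \<theta> / real (k * M))) - 1)))
            \<le> D * (real (Suc M) * exp (real M * (Cl2 (real k * \<theta>) / (real k * \<theta>))))"
proof -
  define \<alpha> where "\<alpha> = real k * \<theta>"
  have k: "0 < k" using \<rho> by (simp add: primitive_root_unity_def)
  have \<alpha>: "0 < \<alpha>" "\<alpha> < 2 * pi" using \<theta> k by (auto simp: \<alpha>_def)
  obtain c where c: "0 < c" "\<And>r \<psi>. r \<in> {1..<k} \<Longrightarrow> \<psi> \<in> {0..\<theta>} \<Longrightarrow> c \<le> cmod (\<rho> ^ r * cis \<psi> - 1)"
    using primitive_root_powers_cis_bounded_away[OF \<rho> \<theta>] by blast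
  define C where "C = exp (2 * real k * \<theta> / c) * (8 / \<alpha> * exp (Cl2' \<alpha>))"
  have "eventually (\<lambda>M. max 2 (max \<alpha> (2 * \<theta> / c)) \<le> real M) sequentially"
    using filterlim_real_sequentially unfolding filterlim_at_top by blast
  then have ev: "eventually (\<lambda>M. (\<Prod>j=1..k * M. inverse (cmod (\<rho> ^ j * exp (\<i> * of_real (real j * \<theta> / real (k * M))) - 1)))
               \<le> C * (real (Suc M) * exp (real M * (Cl2 \<alpha> / \<alpha>)))) sequentially"
  proof eventually_elim
    case (elim M)
    then have M: "1 \<le> M" "2 \<le> M" "\<alpha> \<le> real M" "2 * \<theta> / c \<le> real M" by auto
    have "(\<Prod>j=1..k * M. inverse (cmod (\<rho> ^ j * exp (\<i> * of_real (real j * \<theta> / real (k * M))) - 1)))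
            \<le> exp (2 * real k * \<theta> / c) * (\<Prod>m=1..M. inverse (cmod (cis (real m * \<alpha> / real M) - 1)))"
      unfolding \<alpha>_def using prod_inverse_twisted_le[OF \<rho> \<theta> c M(1,4)] .
    also have "\<dots> \<le> exp (2 * real k * \<theta> / c) * (8 / \<alpha> * exp (Cl2' \<alpha>) * real M * exp (real M * (Cl2 \<alpha> / \<alpha>)))"
      using prod_inverse_norm_cis_minus_1_le[OF \<alpha> M(2,3)] by (intro mult_left_mono) auto
    also have "\<dots> = C * (real M * exp (real M * (Cl2 \<alpha> / \<alpha>)))" by (simp add: C_def mult_ac)
    also have "\<dots> \<le> C * (real (Suc M) * exp (real M * (Cl2 \<alpha> / \<alpha>)))"
      using \<alpha> by (intro mult_left_mono mult_right_mono) (auto simp: C_def)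
    finally show ?case .
  qed
  have pos: "0 < real (Suc M) * exp (real M * (Cl2 \<alpha> / \<alpha>))" for M by simp
  obtain D where "\<And>M. (\<Prod>j=1..k * M. inverse (cmod (\<rho> ^ j * exp (\<i> * of_real (real j * \<theta> / real (k * M))) - 1)))
      \<le> D * (real (Suc M) * exp (real M * (Cl2 \<alpha> / \<alpha>)))"
    using eventually_le_imp_le_const_mult[OF pos ev] by blast
  then show ?thesis using that unfolding \<alpha>_def by blast
qed

theorem proposition4p6:
  fixes k :: nat and \<rho> :: complex and \<theta> :: real
  assumes "primitive_root_unity k \<rho>"
    and "0 < \<theta>" and "\<theta> < 2 * pi / real k"
  shows "\<exists>C. \<forall>N::nat. N \<ge> 1 \<longrightarrow> k dvd N \<longrightarrow>
           (\<Prod>j=1..N. inverse (cmod (\<rho> ^ j * exp (\<i> * of_real (real j * \<theta> / real N)) - 1)))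
             \<le> C * real N ^ (4 * k) * exp (real N / real k * (Cl2 (real k * \<theta>) / (real k * \<theta>)))"
proof -
  have k: "1 \<le> k" using assms(1) by (simp add: primitive_root_unity_def)
  then have "real k * \<theta> < 2 * pi" using assms(3) by (simp add: field_simps)
  then obtain D where D: "\<And>M. (\<Prod>j=1..k * M. inverse (cmod (\<rho> ^ j * exp (\<i> * of_real (real j * \<theta> / real (k * M))) - 1)))
      \<le> D * (real (Suc M) * exp (real M * (Cl2 (real k * \<theta>) / (real k * \<theta>))))"
    using prod_inverse_twisted_bound[OF assms(1,2)] by blast
  show ?thesis
  proof (intro exI[of _ "2 * max D 0"] allI impI)
    fix N :: nat assume N: "1 \<le> N" "k dvd N"
    then obtain M where M: "N = k * M" "1 \<le> M" by (auto elim!: dvdE)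
    then have "M \<le> N" using k by simp
    then have "real (Suc M) \<le> 2 * real N" using M(2) by linarith
    moreover have "real N \<le> real N ^ (4 * k)" using N k by (simp add: power_increasing[of 1, simplified])
    ultimately have growth: "real (Suc M) \<le> 2 * real N ^ (4 * k)" by linarith
    define X where "X = Cl2 (real k * \<theta>) / (real k * \<theta>)"
    have "(\<Prod>j=1..N. inverse (cmod (\<rho> ^ j * exp (\<i> * of_real (real j * \<theta> / real N)) - 1)))
            \<le> D * (real (Suc M) * exp (real M * X))"
      unfolding M(1) X_def by (rule D)
    also have "\<dots> \<le> max D 0 * (real (Suc M) * exp (real M * X))"
      by (intro mult_right_mono) auto
    also have "\<dots> \<le> max D 0 * (2 * real N ^ (4 * k) * exp (real M * X))"
      using growth by (intro mult_left_mono mult_right_mono) auto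
    also have "real M = real N / real k" using M(1) k by simp
    finally show "(\<Prod>j=1..N. inverse (cmod (\<rho> ^ j * exp (\<i> * of_real (real j * \<theta> / real N)) - 1)))
        \<le> 2 * max D 0 * real N ^ (4 * k) * exp (real N / real k * (Cl2 (real k * \<theta>) / (real k * \<theta>)))"
      by (simp add: X_def mult_ac)
  qed
qed

end
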